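(* Let $x_\circ$ be the unique solution of $\Psi_{6.74}(x)=x$ in $[\frac38,\frac12]$. Then $\Phi_3(6.74,x_\circ)>0$.
   Context: $\Psi_d=\dot\Psi\circ\hat\Psi$ with $\hat\Psi(x)=\frac{1-2x^{2}}{1-x^{2}}$, $\dot\Psi(v)=\frac{1-v^{d-1}}{2-v^{d-1}}$; $\Phi_3(d,x)=-\log(1-x)-d(\frac23-d^{-1})\log(1-2x^3)+(d-1)\log(1-x^{2})$. (Existence and uniqueness of $x_\circ$ is known.) *)

theory Defs
  imports Complex_Main
begin

definition Psi_hat :: "real \<Rightarrow> real" where
  "Psi_hat x = (1 - 2 * x^2) / (1 - x^2)"

definition Psi_dot :: "real \<Rightarrow> real \<Rightarrow> real" where
  "Psi_dot d v = (1 - v powr (d - 1)) / (2 - v powr (d - 1))"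

definition Psi :: "real \<Rightarrow> real \<Rightarrow> real" where
  "Psi d = Psi_dot d \<circ> Psi_hat"

definition Phi3 :: "real \<Rightarrow> real \<Rightarrow> real" where
  "Phi3 d x = - ln (1 - x) - d * (2/3 - 1/d) * ln (1 - 2 * x^3) + (d - 1) * ln (1 - x^2)"

end

theory Submission
  imports Defs "HOL-Analysis.Harmonic_Numbers"
begin

(* With v = Psi_hat x and w = v powr (d - 1) we have Psi_d x = (1 - w) / (2 - w), which equals x
   iff w = (1 - 2x) / (1 - x). This never holds at x = 1/2, and for 0 <= x < 1/2 it says that
   Psi_gap d x = (d - 1) ln v - ln ((1 - 2x) / (1 - x)) vanishes. For d = 6.74 the gap is negative
   on [3/8, 2/5] and strictly increasing on [2/5, 1/2), where its derivative has the sign of a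
   positive cubic; so the fixed point is its unique zero there, and two sign evaluations place it
   in [0.446538, 0.446541]. The three logarithmic terms of Phi_3 are monotone, so on this interval
   Phi_3 is at least a number that evaluates to about 1.2e-4. All numerical values of logarithms
   come from the series ln x = 2 sum y^(2k+1) / (2k+1), y = (x - 1) / (x + 1), and its geometric
   tail bound. *)

lemma ln_ge_atanh_sum:
  fixes x :: real
  assumes "1 < x"
  shows "(\<Sum>k<n. 2 * ((x - 1) / (x + 1)) ^ (2*k+1) / of_nat (2*k+1)) \<le> ln x"
  using ln_approx_bounds[of x n] assms by (simp only: atLeastAtMost_iff)

lemma ln_le_atanh_sum:
  fixes x :: real
  assumes "1 < x"
  shows "ln x \<le> (\<Sum>k<n. 2 * ((x - 1) / (x + 1)) ^ (2*k+1) / of_nat (2*k+1))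
    + 2 * (((x - 1) / (x + 1)) ^ (2*n+1) / (1 - ((x - 1) / (x + 1))^2) / of_nat (2*n+1))"
  using ln_approx_bounds[of x n] assms by (simp only: atLeastAtMost_iff)

lemma minus_ln_le_ln_iff:
  fixes x q :: real
  assumes "0 < x" "0 < q"
  shows "- ln q \<le> ln x \<longleftrightarrow> 1 \<le> q * x"
proof -
  have "- ln q \<le> ln x \<longleftrightarrow> 0 \<le> ln (q * x)"
    using assms by (auto simp: ln_mult)
  then show ?thesis
    using assms by simp
qed

lemma ln_le_minus_ln_iff:
  fixes x q :: real
  assumes "0 < x" "0 < q"
  shows "ln x \<le> - ln q \<longleftrightarrow> q * x \<le> 1"
proof -
  have "ln x \<le> - ln q \<longleftrightarrow> ln (q * x) \<le> 0"
    using assms by (auto simp: ln_mult)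
  then show ?thesis
    using assms by simp
qed

lemma Psi_hat_eq_two_minus: "x^2 \<noteq> 1 \<Longrightarrow> Psi_hat x = 2 - 1 / (1 - x^2)"
  by (simp add: Psi_hat_def field_simps)

lemma Psi_hat_pos: "2 * x^2 < 1 \<Longrightarrow> 0 < Psi_hat x"
  by (simp add: Psi_hat_def)

lemma Psi_hat_le_one: "x^2 < 1 \<Longrightarrow> Psi_hat x \<le> 1"
  by (simp add: Psi_hat_def)

lemma Psi_hat_antimono:
  assumes "0 \<le> a" "a \<le> x" "x < 1"
  shows "Psi_hat x \<le> Psi_hat a"
proof -
  have "a^2 \<le> x^2" "x^2 < 1"
    using assms by (auto intro: power_mono simp: power_less_one_iff abs_square_less_1)
  then show ?thesis
    by (simp add: Psi_hat_eq_two_minus divide_left_mono)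
qed

lemma Psi_eq_self_iff_powr:
  assumes "1 \<le> d" "0 \<le> x" "x \<le> 1/2"
  shows "Psi d x = x \<longleftrightarrow> Psi_hat x powr (d - 1) = (1 - 2*x) / (1 - x)"
proof -
  define w where "w = Psi_hat x powr (d - 1)"
  have "x^2 \<le> 1/4"
    using assms power_mono[of x "1/2" 2] by (simp add: power_divide)
  then have "0 < Psi_hat x" "Psi_hat x \<le> 1"
    by (auto intro!: Psi_hat_pos Psi_hat_le_one)
  then have "w \<le> 1"
    using assms by (simp add: w_def powr_le1)
  have "Psi d x = (1 - w) / (2 - w)"
    by (simp add: Psi_def Psi_dot_def w_def)
  also have "\<dots> = x \<longleftrightarrow> 1 - w = x * (2 - w)"
    using \<open>w \<le> 1\<close> by (simp add: field_simps)
  also have "\<dots> \<longleftrightarrow> w = (1 - 2*x) / (1 - x)"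
    using assms by (auto simp: field_simps)
  finally show ?thesis
    by (simp add: w_def)
qed

definition Psi_gap :: "real \<Rightarrow> real \<Rightarrow> real" where
  "Psi_gap d x = (d - 1) * ln (Psi_hat x) - ln ((1 - 2*x) / (1 - x))"

lemma Psi_eq_self_iff_gap:
  assumes "1 \<le> d" "0 \<le> x" "x \<le> 1/2"
  shows "Psi d x = x \<longleftrightarrow> x < 1/2 \<and> Psi_gap d x = 0"
proof -
  have "x^2 \<le> 1/4"
    using assms power_mono[of x "1/2" 2] by (simp add: power_divide)
  then have "0 < Psi_hat x"
    by (auto intro!: Psi_hat_pos)
  show ?thesis
  proof (cases "x = 1/2")
    case True
    then have "(1 - 2*x) / (1 - x) = 0"
      by simp
    moreover have "Psi_hat x powr (d - 1) \<noteq> 0"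
      using \<open>0 < Psi_hat x\<close> by simp
    ultimately have "Psi d x \<noteq> x"
      using Psi_eq_self_iff_powr[OF assms] by metis
    with True show ?thesis
      by simp
  next
    case False
    then have "0 < (1 - 2*x) / (1 - x)"
      using assms by simp
    then have "Psi_hat x powr (d - 1) = (1 - 2*x) / (1 - x)
        \<longleftrightarrow> ln (Psi_hat x powr (d - 1)) = ln ((1 - 2*x) / (1 - x))"
      using \<open>0 < Psi_hat x\<close> by (simp only: ln_inj_iff powr_gt_zero less_irrefl)
    then show ?thesis
      using Psi_eq_self_iff_powr[OF assms] False assms by (simp add: Psi_gap_def)
  qed
qed

lemma Psi_gap_le_on_interval:
  assumes "1 \<le> d" "0 \<le> a" "a \<le> x" "x \<le> b" "b < 1/2"
  shows "Psi_gap d x \<le> (d - 1) * ln (Psi_hat a) - ln ((1 - 2*b) / (1 - b))"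
proof -
  have "a^2 \<le> 1/4"
    using assms power_mono[of a "1/2" 2] by (simp add: power_divide)
  have "x^2 \<le> 1/4"
    using assms power_mono[of x "1/2" 2] by (simp add: power_divide)
  then have "ln (Psi_hat x) \<le> ln (Psi_hat a)"
    using assms \<open>a^2 \<le> 1/4\<close> by (simp add: Psi_hat_pos Psi_hat_antimono)
  then have "(d - 1) * ln (Psi_hat x) \<le> (d - 1) * ln (Psi_hat a)"
    using assms by (simp add: mult_left_mono)
  moreover have "ln ((1 - 2*b) / (1 - b)) \<le> ln ((1 - 2*x) / (1 - x))"
    using assms by (simp add: field_simps)
  ultimately show ?thesis
    by (simp add: Psi_gap_def)
qed

lemma ln_Psi_hat_has_real_derivative:
  assumes "2 * x^2 < 1"
  shows "((\<lambda>y. ln (Psi_hat y)) has_real_derivative - 2 * x / ((1 - x^2) * (1 - 2*x^2))) (at x)"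
proof -
  have "1 - x^2 \<noteq> 0" "1 - 2*x^2 \<noteq> 0" "0 < (1 - 2*x^2) / (1 - x^2)"
    using assms by auto
  then show ?thesis
    unfolding Psi_hat_def
    by (auto intro!: derivative_eq_intros simp: divide_simps) (simp add: algebra_simps power2_eq_square)
qed

lemma ln_ratio_has_real_derivative:
  assumes "x < 1/2"
  shows "((\<lambda>y. ln ((1 - 2*y) / (1 - y))) has_real_derivative - 1 / ((1 - x) * (1 - 2*x))) (at x)"
proof -
  have "1 - x \<noteq> 0" "1 - 2*x \<noteq> 0" "0 < (1 - 2*x) / (1 - x)"
    using assms by auto
  then show ?thesis
    by (auto intro!: derivative_eq_intros simp: divide_simps)
qed

lemma Psi_gap_has_real_derivative:
  assumes "0 \<le> x" "x < 1/2"
  shows "(Psi_gap d has_real_derivative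
      1 / ((1 - x) * (1 - 2*x)) - 2 * (d - 1) * x / ((1 - x^2) * (1 - 2*x^2))) (at x)"
proof -
  have "x^2 \<le> 1/4"
    using assms power_mono[of x "1/2" 2] by (simp add: power_divide)
  then have "2 * x^2 < 1"
    by simp
  have "(Psi_gap d has_real_derivative
      (d - 1) * (- 2 * x / ((1 - x^2) * (1 - 2*x^2))) - - 1 / ((1 - x) * (1 - 2*x))) (at x)"
    unfolding Psi_gap_def[abs_def]
    by (intro DERIV_diff DERIV_cmult ln_Psi_hat_has_real_derivative ln_ratio_has_real_derivative
        \<open>2 * x^2 < 1\<close> \<open>x < 1/2\<close>)
  then show ?thesis
    by (simp add: algebra_simps)
qed

lemma Psi_gap_674_neg:
  assumes "3/8 \<le> x" "x \<le> 2/5"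
  shows "Psi_gap 6.74 x < 0"
proof (cases "x \<le> 39/100")
  case True
  have "Psi_gap 6.74 x \<le> 287/50 * - ln (55/46) + ln (61/22)"
    using Psi_gap_le_on_interval[of "6.74" "3/8" x "39/100"] assms True
      ln_inverse[of "55/46"] ln_inverse[of "61/22"]
    by (simp add: Psi_hat_def power2_eq_square)
  moreover have "0.1786 \<le> ln (55/46 :: real)"
    using ln_ge_atanh_sum[of "55/46" 2] by (simp add: eval_nat_numeral)
  moreover have "ln (61/22 :: real) \<le> 1.02"
    using ln_le_atanh_sum[of "61/22" 3] by (simp add: eval_nat_numeral)
  ultimately show ?thesis
    by simp
next
  case False
  have "Psi_gap 6.74 x \<le> 287/50 * - ln (8479/6958) + ln 3"
    using Psi_gap_le_on_interval[of "6.74" "39/100" x "2/5"] assms False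
      ln_inverse[of "8479/6958"] ln_inverse[of 3]
    by (simp add: Psi_hat_def power2_eq_square)
  moreover have "0.1976 \<le> ln (8479/6958 :: real)"
    using ln_ge_atanh_sum[of "8479/6958" 2] by (simp add: eval_nat_numeral)
  moreover have "ln (3 :: real) \<le> 1.1"
    using ln_le_atanh_sum[of 3 3] by (simp add: eval_nat_numeral)
  ultimately show ?thesis
    by simp
qed

lemma Psi_gap_674_derivative_numerator_pos:
  fixes x :: real
  assumes "2/5 \<le> x" "x \<le> 1/2"
  shows "2 * (287/50) * x * (1 - 2*x) < (1 + x) * (1 - 2*x^2)"
proof -
  define t where "t = x - 2/5"
  have "0 \<le> t" "t \<le> 1/10"
    using assms by (auto simp: t_def)
  then have "0 \<le> t^2 * (464/25 - 2*t)"
    by simp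
  moreover have "(1 + x) * (1 - 2*x^2) - 2 * (287/50) * x * (1 - 2*x)
      = 21/625 + 666/125 * t + t^2 * (464/25 - 2*t)"
    unfolding t_def power2_eq_square by (simp add: field_simps)
  ultimately show ?thesis
    using \<open>0 \<le> t\<close> by linarith
qed

lemma Psi_gap_674_derivative_pos:
  fixes x :: real
  assumes "2/5 \<le> x" "x < 1/2"
  shows "0 < 1 / ((1 - x) * (1 - 2*x)) - 2 * (6.74 - 1) * x / ((1 - x^2) * (1 - 2*x^2))"
proof -
  have "x^2 \<le> 1/4"
    using assms power_mono[of x "1/2" 2] by (simp add: power_divide)
  then have Q: "0 < (1 - x) * (1 - 2*x)" and P: "0 < (1 - x^2) * (1 - 2*x^2)"
    using assms by auto
  have "(1 - x) * (2 * (287/50) * x * (1 - 2*x)) < (1 - x) * ((1 + x) * (1 - 2*x^2))"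
    using Psi_gap_674_derivative_numerator_pos[of x] assms by (intro mult_strict_left_mono) auto
  then have "2 * (287/50) * x * ((1 - x) * (1 - 2*x)) < (1 - x^2) * (1 - 2*x^2)"
    by (simp add: power2_eq_square algebra_simps)
  then have "2 * (287/50) * x / ((1 - x^2) * (1 - 2*x^2)) < 1 / ((1 - x) * (1 - 2*x))"
    using P Q by (simp add: pos_divide_less_eq pos_less_divide_eq)
  then show ?thesis
    by simp
qed

lemma Psi_gap_674_strict_mono_on: "strict_mono_on {2/5..<1/2} (Psi_gap 6.74)"
proof (rule strict_mono_onI)
  fix x y :: real
  assume x: "x \<in> {2/5..<1/2}" and y: "y \<in> {2/5..<1/2}" and "x < y"
  have "\<exists>D. (Psi_gap 6.74 has_real_derivative D) (at z) \<and> 0 < D" if "x \<le> z" "z \<le> y" for z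
    using Psi_gap_has_real_derivative[of z "6.74"] Psi_gap_674_derivative_pos[of z] x y that
    by auto
  then show "Psi_gap 6.74 x < Psi_gap 6.74 y"
    using DERIV_pos_imp_increasing[OF \<open>x < y\<close>] by blast
qed

(* Here and below ln is evaluated not at the exact values but at nearby rationals with few digits
   (133165943/100000000, ...), which keeps the series evaluation cheap; splitting the factor 2 * 2
   off the ratio puts the remaining argument near 1, where the series converges fast. *)
lemma Psi_gap_674_neg_at_0446538: "Psi_gap 6.74 0.446538 < 0"
proof -
  have "ln (Psi_hat 0.446538) \<le> - ln (133165943/100000000)"
    by (subst ln_le_minus_ln_iff) (simp_all add: Psi_hat_def power2_eq_square)
  moreover have "- ln (2 * 2 * (276731/213848)) \<le> ln ((1 - 2 * 0.446538) / (1 - 0.446538 :: real))"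
    by (subst minus_ln_le_ln_iff) simp_all
  moreover have "ln (2 * 2 * (276731/213848)) = ln 2 + ln 2 + ln (276731/213848 :: real)"
    using ln_mult[of 2 "2 * (276731/213848)"] ln_mult[of 2 "276731/213848"] by simp
  moreover have "0.286425856 \<le> ln (133165943/100000000 :: real)"
    using ln_ge_atanh_sum[of "133165943/100000000" 6] by (simp add: eval_nat_numeral)
  moreover have "ln (2 :: real) \<le> 0.693147181"
    using ln_le_atanh_sum[of 2 11] by (simp add: eval_nat_numeral)
  moreover have "ln (276731/213848 :: real) \<le> 0.257780433"
    using ln_le_atanh_sum[of "276731/213848" 6] by (simp add: eval_nat_numeral)
  ultimately show ?thesis
    by (simp add: Psi_gap_def)
qed

lemma Psi_gap_674_pos_at_0446541: "0 < Psi_gap 6.74 0.446541"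
proof -
  have "- ln (66583343/50000000) \<le> ln (Psi_hat 0.446541)"
    by (subst minus_ln_le_ln_iff) (simp_all add: Psi_hat_def power2_eq_square)
  moreover have "ln ((1 - 2 * 0.446541) / (1 - 0.446541 :: real)) \<le> - ln (2 * 2 * (553459/427672))"
    by (subst ln_le_minus_ln_iff) simp_all
  moreover have "ln (2 * 2 * (553459/427672)) = ln 2 + ln 2 + ln (553459/427672 :: real)"
    using ln_mult[of 2 "2 * (553459/427672)"] ln_mult[of 2 "553459/427672"] by simp
  moreover have "ln (66583343/50000000 :: real) \<le> 0.286431436"
    using ln_le_atanh_sum[of "66583343/50000000" 6] by (simp add: eval_nat_numeral)
  moreover have "0.693147180 \<le> ln (2 :: real)"
    using ln_ge_atanh_sum[of 2 11] by (simp add: eval_nat_numeral)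
  moreover have "0.257831128 \<le> ln (553459/427672 :: real)"
    using ln_ge_atanh_sum[of "553459/427672" 6] by (simp add: eval_nat_numeral)
  ultimately show ?thesis
    by (simp add: Psi_gap_def)
qed

lemma Psi_674_unique_fixed_point:
  obtains x\<^sub>0 where "x\<^sub>0 \<in> {0.446538..0.446541}"
    and "\<And>x. x \<in> {3/8..1/2} \<and> Psi 6.74 x = x \<longleftrightarrow> x = x\<^sub>0"
proof -
  have "continuous_on {0.446538..0.446541} (Psi_gap 6.74)"
    by (intro continuous_at_imp_continuous_on ballI DERIV_isCont[OF Psi_gap_has_real_derivative]) auto
  then obtain x\<^sub>0 where x\<^sub>0: "x\<^sub>0 \<in> {0.446538..0.446541}" "Psi_gap 6.74 x\<^sub>0 = 0"
    using IVT'[of "Psi_gap 6.74" "0.446538" 0 "0.446541"]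
      Psi_gap_674_neg_at_0446538 Psi_gap_674_pos_at_0446541 by auto
  have "Psi_gap 6.74 x = 0 \<longleftrightarrow> x = x\<^sub>0" if "x \<in> {3/8..<1/2}" for x
  proof (cases "x \<le> 2/5")
    case True
    then show ?thesis
      using Psi_gap_674_neg[of x] that x\<^sub>0 by auto
  next
    case False
    then have "x \<in> {2/5..<1/2}" "x\<^sub>0 \<in> {2/5..<1/2}"
      using that x\<^sub>0(1) by auto
    then show ?thesis
      using strict_mono_on_eqD[OF Psi_gap_674_strict_mono_on] x\<^sub>0(2) by metis
  qed
  then have "x \<in> {3/8..1/2} \<and> Psi 6.74 x = x \<longleftrightarrow> x = x\<^sub>0" for x
    using Psi_eq_self_iff_gap[of "6.74" x] x\<^sub>0(1) by auto
  with x\<^sub>0(1) show ?thesis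
    using that by blast
qed

lemma Phi3_ge_on_interval:
  assumes "3/2 \<le> d" "0 \<le> a" "a \<le> x" "x \<le> b" "b \<le> 1/2"
  shows "- ln (1 - a) - d * (2/3 - 1/d) * ln (1 - 2 * a^3) + (d - 1) * ln (1 - b^2) \<le> Phi3 d x"
proof -
  have "a^3 \<le> x^3" "x^3 \<le> 1/8" "x^2 \<le> b^2" "b^2 \<le> 1/4"
    using assms power_mono[of a x 3] power_mono[of x "1/2" 3] power_mono[of x b 2]
      power_mono[of b "1/2" 2] by (auto simp: power_divide)
  then have "ln (1 - x) \<le> ln (1 - a)" "ln (1 - 2 * x^3) \<le> ln (1 - 2 * a^3)"
    "ln (1 - b^2) \<le> ln (1 - x^2)"
    using assms by (auto intro!: ln_mono)
  moreover have "0 \<le> d * (2/3 - 1/d)" "0 \<le> d - 1"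
    using assms by (auto simp: field_simps)
  ultimately have "d * (2/3 - 1/d) * ln (1 - 2 * x^3) \<le> d * (2/3 - 1/d) * ln (1 - 2 * a^3)"
    "(d - 1) * ln (1 - b^2) \<le> (d - 1) * ln (1 - x^2)"
    by (simp_all add: mult_left_mono)
  with \<open>ln (1 - x) \<le> ln (1 - a)\<close> show ?thesis
    unfolding Phi3_def by linarith
qed

lemma Phi3_674_bound_pos:
  "0 < - ln (1 - 0.446538) - 6.74 * (2/3 - 1/6.74) * ln (1 - 2 * 0.446538^3)
     + (6.74 - 1) * ln (1 - 0.446541^2 :: real)"
proof -
  have "ln (1 - 0.446538 :: real) \<le> - ln (500000/276731)"
    by (subst ln_le_minus_ln_iff) simp_all
  moreover have "ln (1 - 2 * 0.446538^3 :: real) \<le> - ln (60832871/50000000)"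
    by (subst ln_le_minus_ln_iff) (simp_all add: power3_eq_cube)
  moreover have "- ln (3903317/3125000) \<le> ln (1 - 0.446541^2 :: real)"
    by (subst minus_ln_le_ln_iff) (simp_all add: power2_eq_square)
  moreover have "0.591562183 \<le> ln (500000/276731 :: real)"
    using ln_ge_atanh_sum[of "500000/276731" 9] by (simp add: eval_nat_numeral)
  moreover have "0.196107278 \<le> ln (60832871/50000000 :: real)"
    using ln_ge_atanh_sum[of "60832871/50000000" 5] by (simp add: eval_nat_numeral)
  moreover have "ln (3903317/3125000 :: real) \<le> 0.222392422"
    using ln_le_atanh_sum[of "3903317/3125000" 5] by (simp add: eval_nat_numeral)
  ultimately show ?thesis
    by simp
qed

theorem lemma4p5:
  shows "Phi3 6.74 (THE x. x \<in> {3/8..1/2} \<and> Psi 6.74 x = x) > 0"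
proof -
  obtain x\<^sub>0 where x\<^sub>0: "x\<^sub>0 \<in> {0.446538..0.446541}"
    and fixed_point_iff: "\<And>x. x \<in> {3/8..1/2} \<and> Psi 6.74 x = x \<longleftrightarrow> x = x\<^sub>0"
    using Psi_674_unique_fixed_point by blast
  have "(THE x. x \<in> {3/8..1/2} \<and> Psi 6.74 x = x) = x\<^sub>0"
    unfolding fixed_point_iff by simp
  moreover have "0 < Phi3 6.74 x\<^sub>0"
    using Phi3_674_bound_pos Phi3_ge_on_interval[of "6.74" "0.446538" x\<^sub>0 "0.446541"] x\<^sub>0
    by simp
  ultimately show ?thesis
    by simp
qed

end
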